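(* Let $\sigma\colon\Sigma\to\Sigma$ be a two-sided subshift of finite type, $0<\theta<1$, $f\colon\Sigma\to\mathbb R$ Lipschitz w.r.t. $d_\theta$, and $F(x,r)=(\sigma x,r+f(x))$ on $\Sigma\times\mathbb R$. Let $K\subset\Sigma\times\mathbb R$ be compact with $\overline{\operatorname{int}(K)}=K$. If $p\in\Sigma\times\mathbb R$ satisfies $K\subset AC(p)$, then there is $N$ such that $K\subset AC_N(p)$.
   Context: $d_\theta(x,y)=\theta^{\max\{j:\ x_i=y_i\ \forall|i|<j\}}$, $f_n=\sum_{i<n}f\circ\sigma^i$. Strong stable/unstable manifolds: $(y,s)\in W^s(x,r)$ iff $y_i=x_i$ for all sufficiently large $i$ and $s-r=\lim_n(f_n(x)-f_n(y))$; $(y,s)\in W^u(x,r)$ iff $y_i=x_i$ for all sufficiently negative $i$ and $s-r=\lim_n(f_n(\sigma^{-n}y)-f_n(\sigma^{-n}x))$. $AC(p)$ is the set of points reachable from $p$ by a finite chain of points each in $W^s$ or $W^u$ of the previous one. For $n\in\mathbb Z$ and $x\in\Sigma$: $W^s_n(x)=\{y: y_i=x_i\ \forall i\ge n\}$, $W^u_n(x)=\{y: y_i=x_i\ \forall i\le -n\}$; for points of $\Sigma\times\mathbb R$, $(y,t)\in W^s_n(x,s)$ iff $(y,t)\in W^s(x,s)$ and $y\in W^s_n(x)$, and similarly for $W^u_n$. A $us$-$N$-path from $p$ to $q$ is a sequence $p=p_0,\dots,p_k=q$ with $k\le N$ and $p_{j+1}\in W^s_N(p_j)\cup W^u_N(p_j)$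 for each $j$; $AC_N(p)$ is the set of $q$ reachable from $p$ by a $us$-$N$-path. *)

theory Defs
  imports "HOL-Analysis.Analysis"
begin

definition SFT :: "nat \<Rightarrow> (nat \<Rightarrow> nat \<Rightarrow> bool) \<Rightarrow> (int \<Rightarrow> nat) set" where
  "SFT k A = {x. \<forall>i. x i < k \<and> A (x i) (x (i + 1))}"

definition shift :: "(int \<Rightarrow> nat) \<Rightarrow> (int \<Rightarrow> nat)" where
  "shift x = (\<lambda>i. x (i + 1))"

definition dtheta :: "real \<Rightarrow> (int \<Rightarrow> nat) \<Rightarrow> (int \<Rightarrow> nat) \<Rightarrow> real" where
  "dtheta \<theta> x y = (if x = y then 0
     else \<theta> ^ (GREATEST j::nat. \<forall>i. \<bar>i\<bar> < int j \<longrightarrow> x i = y i))"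

definition SigmaR_top :: "nat \<Rightarrow> (nat \<Rightarrow> nat \<Rightarrow> bool) \<Rightarrow> real \<Rightarrow> ((int \<Rightarrow> nat) \<times> real) topology" where
  "SigmaR_top k A \<theta> = prod_topology (Metric_space.mtopology (SFT k A) (dtheta \<theta>)) euclideanreal"

definition birk :: "((int \<Rightarrow> nat) \<Rightarrow> real) \<Rightarrow> nat \<Rightarrow> (int \<Rightarrow> nat) \<Rightarrow> real" where
  "birk f n x = (\<Sum>i<n. f ((shift ^^ i) x))"

definition shift_back :: "nat \<Rightarrow> (int \<Rightarrow> nat) \<Rightarrow> (int \<Rightarrow> nat)" where
  "shift_back n y = (\<lambda>i. y (i - int n))"

definition Ws :: "nat \<Rightarrow> (nat \<Rightarrow> nat \<Rightarrow> bool) \<Rightarrow> ((int \<Rightarrow> nat) \<Rightarrow> real)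
    \<Rightarrow> (int \<Rightarrow> nat) \<times> real \<Rightarrow> ((int \<Rightarrow> nat) \<times> real) set" where
  "Ws k A f p = {(y, s). y \<in> SFT k A \<and> (\<exists>m. \<forall>i\<ge>m. y i = fst p i) \<and>
      (\<lambda>n. birk f n (fst p) - birk f n y) \<longlonglongrightarrow> s - snd p}"

definition Wu :: "nat \<Rightarrow> (nat \<Rightarrow> nat \<Rightarrow> bool) \<Rightarrow> ((int \<Rightarrow> nat) \<Rightarrow> real)
    \<Rightarrow> (int \<Rightarrow> nat) \<times> real \<Rightarrow> ((int \<Rightarrow> nat) \<times> real) set" where
  "Wu k A f p = {(y, s). y \<in> SFT k A \<and> (\<exists>m. \<forall>i\<le>m. y i = fst p i) \<and>
      (\<lambda>n. birk f n (shift_back n y) - birk f n (shift_back n (fst p))) \<longlonglongrightarrow> s - snd p}"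

definition AC :: "nat \<Rightarrow> (nat \<Rightarrow> nat \<Rightarrow> bool) \<Rightarrow> ((int \<Rightarrow> nat) \<Rightarrow> real)
    \<Rightarrow> (int \<Rightarrow> nat) \<times> real \<Rightarrow> ((int \<Rightarrow> nat) \<times> real) set" where
  "AC k A f p = {q. (\<lambda>a b. b \<in> Ws k A f a \<union> Wu k A f a)\<^sup>*\<^sup>* p q}"

definition Wsn :: "nat \<Rightarrow> (nat \<Rightarrow> nat \<Rightarrow> bool) \<Rightarrow> ((int \<Rightarrow> nat) \<Rightarrow> real) \<Rightarrow> int
    \<Rightarrow> (int \<Rightarrow> nat) \<times> real \<Rightarrow> ((int \<Rightarrow> nat) \<times> real) set" where
  "Wsn k A f n p = {q. q \<in> Ws k A f p \<and> (\<forall>i\<ge>n. fst q i = fst p i)}"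

definition Wun :: "nat \<Rightarrow> (nat \<Rightarrow> nat \<Rightarrow> bool) \<Rightarrow> ((int \<Rightarrow> nat) \<Rightarrow> real) \<Rightarrow> int
    \<Rightarrow> (int \<Rightarrow> nat) \<times> real \<Rightarrow> ((int \<Rightarrow> nat) \<times> real) set" where
  "Wun k A f n p = {q. q \<in> Wu k A f p \<and> (\<forall>i\<le>-n. fst q i = fst p i)}"

definition ACN :: "nat \<Rightarrow> (nat \<Rightarrow> nat \<Rightarrow> bool) \<Rightarrow> ((int \<Rightarrow> nat) \<Rightarrow> real) \<Rightarrow> nat
    \<Rightarrow> (int \<Rightarrow> nat) \<times> real \<Rightarrow> ((int \<Rightarrow> nat) \<times> real) set" where
  "ACN k A f N p = {q. \<exists>j\<le>N.
      ((\<lambda>a b. b \<in> Wsn k A f (int N) a \<union> Wun k A f (int N) a) ^^ j) p q}"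

end

theory Submission
  imports Defs "HOL-Library.Diagonal_Subsequence"
begin

(* The sets AC_N(p) increase with N and exhaust AC(p), and each of them is closed: given
   us-N-paths ending closer and closer to a point q, pass to a subsequence along which the
   itineraries of all corners converge coordinatewise and every leg is eventually of one kind
   (stable or unstable). The time offset of a leg is an absolutely convergent series of
   Lipschitz terms, continuous in the itineraries, so the limit is again a us-N-path; it ends
   at q.  By the Baire category theorem in the compact Hausdorff space K, some AC_N(p) has
   interior relative to K, and since K is the closure of its interior, AC_N(p) contains a
   vertical segment through some point u.  A point q' close to a point q of AC(p) is reached
   from a vertical translate of q by a stable leg followed by an unstable leg with small
   offsets, while the vertical translates of q are reached from those of u along one fixed
   path.  So every point of K has a neighbourhood inside some AC_L(p), and compactness of K
   bounds L. *)

section \<open>Agreement of itineraries and the metric \<open>d\<^sub>\<theta>\<close>\<close>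

definition agree :: "nat \<Rightarrow> (int \<Rightarrow> nat) \<Rightarrow> (int \<Rightarrow> nat) \<Rightarrow> bool" where
  "agree n x y \<longleftrightarrow> (\<forall>i. \<bar>i\<bar> < int n \<longrightarrow> x i = y i)"

lemma agree_mono: "agree n x y \<Longrightarrow> m \<le> n \<Longrightarrow> agree m x y"
  unfolding agree_def by auto

lemma agree_refl [simp]: "agree n x x"
  unfolding agree_def by auto

lemma agree_sym: "agree n x y \<Longrightarrow> agree n y x"
  unfolding agree_def by auto

lemma agree_trans: "agree n x y \<Longrightarrow> agree n y z \<Longrightarrow> agree n x z"
  unfolding agree_def by auto

lemma dtheta_cases:
  obtains "x = y" "dtheta \<theta> x y = 0"
    | G where "x \<noteq> y" "dtheta \<theta> x y = \<theta> ^ G" "\<And>j. agree j x y \<longleftrightarrow> j \<le> G"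
proof (cases "x = y")
  case True
  then show ?thesis using that(1) by (simp add: dtheta_def)
next
  case False
  then obtain i0 where i0: "x i0 \<noteq> y i0" by auto
  have bounded: "j \<le> nat \<bar>i0\<bar>" if "agree j x y" for j
  proof (rule ccontr)
    assume "\<not> j \<le> nat \<bar>i0\<bar>"
    then have "\<bar>i0\<bar> < int j" by linarith
    then show False using that i0 unfolding agree_def by blast
  qed
  have agree0: "agree 0 x y"
    by (simp add: agree_def)
  define G where "G = (GREATEST j. agree j x y)"
  have "agree G x y"
    unfolding G_def using agree0 bounded by (rule GreatestI_nat)
  moreover have "j \<le> G" if "agree j x y" for j
    unfolding G_def using that bounded by (rule Greatest_le_nat)
  ultimately have "agree j x y \<longleftrightarrow> j \<le> G" for j
    using agree_mono by blast
  moreover have "dtheta \<theta> x y = \<theta> ^ G"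
    using False by (simp add: dtheta_def G_def agree_def)
  ultimately show ?thesis
    by (rule that(2)[OF False, rotated])
qed

lemma dtheta_agree: "dtheta \<theta> x y = (if x = y then 0 else \<theta> ^ (GREATEST j. agree j x y))"
  by (simp add: dtheta_def agree_def)

lemma dtheta_le_power_iff:
  assumes "0 < \<theta>" "\<theta> < 1"
  shows "dtheta \<theta> x y \<le> \<theta> ^ n \<longleftrightarrow> agree n x y"
  by (cases rule: dtheta_cases[where x=x and y=y and \<theta>=\<theta>]) (use assms in \<open>auto simp: power_decreasing_iff\<close>)

lemma dtheta_less_power_iff:
  assumes "0 < \<theta>" "\<theta> < 1"
  shows "dtheta \<theta> x y < \<theta> ^ n \<longleftrightarrow> agree (Suc n) x y"
  by (cases rule: dtheta_cases[where x=x and y=y and \<theta>=\<theta>])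
    (use assms in \<open>auto simp: power_strict_decreasing_iff Suc_le_eq\<close>)

lemma dtheta_ultrametric:
  assumes "0 < \<theta>" "\<theta> < 1"
  shows "dtheta \<theta> x z \<le> max (dtheta \<theta> x y) (dtheta \<theta> y z)"
proof -
  consider "x = y" | "y = z"
    | a b where "dtheta \<theta> x y = \<theta> ^ a" "dtheta \<theta> y z = \<theta> ^ b"
  proof (cases rule: dtheta_cases[where x=x and y=y and \<theta>=\<theta>])
    case (2 a)
    then show ?thesis
      by (cases rule: dtheta_cases[where x=y and y=z and \<theta>=\<theta>]) (use that in blast)+
  qed (use that in blast)
  then show ?thesis
  proof cases
    case 3
    define c where "c = min a b"
    have "\<theta> ^ c = max (\<theta> ^ a) (\<theta> ^ b)"
      using assms by (auto simp: c_def min_def max_def power_decreasing_iff)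
    then have "agree c x y" "agree c y z"
      using 3 dtheta_le_power_iff[OF assms] by (metis max.cobounded1 max.cobounded2)+
    then have "dtheta \<theta> x z \<le> \<theta> ^ c"
      using dtheta_le_power_iff[OF assms] agree_trans by blast
    then show ?thesis using 3 \<open>\<theta> ^ c = _\<close> by simp
  qed (simp_all add: dtheta_def)
qed

lemma Metric_space_dtheta:
  assumes "0 < \<theta>" "\<theta> < 1"
  shows "Metric_space M (dtheta \<theta>)"
proof
  fix x y z
  show nonneg: "0 \<le> dtheta \<theta> x y" for x y
    using assms by (cases rule: dtheta_cases[where x=x and y=y and \<theta>=\<theta>]) auto
  show "dtheta \<theta> x y = dtheta \<theta> y x"
  proof -
    have "(GREATEST j. agree j x y) = (GREATEST j. agree j y x)"
      using agree_sym by (intro arg_cong[where f = Greatest]) blast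
    then show ?thesis
      by (simp add: dtheta_agree eq_commute[of y x])
  qed
  show "dtheta \<theta> x y = 0 \<longleftrightarrow> x = y"
    using assms by (cases rule: dtheta_cases[where x=x and y=y and \<theta>=\<theta>]) auto
  show "dtheta \<theta> x z \<le> dtheta \<theta> x y + dtheta \<theta> y z"
    using dtheta_ultrametric[OF assms, of x z y] nonneg[of x y] nonneg[of y z] by linarith
qed

lemma shift_pow: "(shift ^^ j) x = (\<lambda>i. x (i + int j))"
  by (induction j arbitrary: x) (auto simp: shift_def add.assoc)

lemma SFT_translate:
  assumes "x \<in> SFT k A"
  shows "(\<lambda>i. x (i + c)) \<in> SFT k A"
  unfolding SFT_def
proof (intro CollectI allI)
  fix i
  have "x (i + c) < k \<and> A (x (i + c)) (x (i + c + 1))"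
    using assms unfolding SFT_def by blast
  then show "x (i + c) < k \<and> A (x (i + c)) (x (i + 1 + c))"
    by (simp add: ac_simps)
qed

lemma shift_pow_SFT: "x \<in> SFT k A \<Longrightarrow> (shift ^^ j) x \<in> SFT k A"
  unfolding shift_pow by (rule SFT_translate)

lemma shift_back_SFT: "x \<in> SFT k A \<Longrightarrow> shift_back n x \<in> SFT k A"
  unfolding shift_back_def using SFT_translate[of x k A "- int n"] by simp

lemma birk_shift_back: "birk f n (shift_back n y) = (\<Sum>l<n. f (shift_back (Suc l) y))"
proof -
  have "birk f n (shift_back n y) = (\<Sum>j<n. f (shift_back (n - j) y))"
    unfolding birk_def
    by (intro sum.cong refl) (auto simp: shift_pow shift_back_def of_nat_diff algebra_simps)
  also have "\<dots> = (\<Sum>j<n. (\<lambda>l. f (shift_back (Suc l) y)) (n - Suc j))"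
    by (intro sum.cong refl) (auto simp: Suc_diff_Suc)
  also have "\<dots> = (\<Sum>l<n. f (shift_back (Suc l) y))"
    by (rule sum.nat_diff_reindex)
  finally show ?thesis .
qed

definition splice :: "(int \<Rightarrow> nat) \<Rightarrow> (int \<Rightarrow> nat) \<Rightarrow> int \<Rightarrow> nat" where
  "splice x y i = (if i < 0 then x i else y i)"

lemma splice_SFT:
  assumes "x \<in> SFT k A" "y \<in> SFT k A" "x (-1) = y (-1)"
  shows "splice x y \<in> SFT k A"
  unfolding SFT_def
proof (intro CollectI allI)
  fix i
  have x: "x i < k \<and> A (x i) (x (i + 1))" and y: "y i < k \<and> A (y i) (y (i + 1))"
    using assms(1,2) by (auto simp: SFT_def)
  consider "i + 1 < 0" | "i = -1" | "0 \<le> i"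
    by linarith
  then show "splice x y i < k \<and> A (splice x y i) (splice x y (i + 1))"
  proof cases
    case 1
    then show ?thesis using x by (simp add: splice_def)
  next
    case 2
    then show ?thesis using y assms(3) by (simp add: splice_def)
  next
    case 3
    then show ?thesis using y by (simp add: splice_def)
  qed
qed

definition vshift :: "real \<Rightarrow> (int \<Rightarrow> nat) \<times> real \<Rightarrow> (int \<Rightarrow> nat) \<times> real" where
  "vshift \<tau> a = (fst a, snd a + \<tau>)"

section \<open>Series with geometric majorants\<close>

lemma summable_power_nat_diff:
  fixes \<theta> :: real
  assumes "0 < \<theta>" "\<theta> < 1"
  shows "summable (\<lambda>j. \<theta> ^ nat (int j - m))"
proof (rule summable_comparison_test)
  have "\<theta> ^ nat (int j - m) \<le> \<theta> ^ j / \<theta> ^ nat m" for j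
  proof -
    have "\<theta> ^ (nat (int j - m) + nat m) \<le> \<theta> ^ j"
      using assms by (intro power_decreasing) auto
    then show ?thesis
      using assms by (simp add: power_add field_simps)
  qed
  then show "\<exists>N. \<forall>j\<ge>N. norm (\<theta> ^ nat (int j - m)) \<le> \<theta> ^ j / \<theta> ^ nat m"
    using assms by auto
  show "summable (\<lambda>j. \<theta> ^ j / \<theta> ^ nat m)"
    using assms by (intro summable_divide summable_geometric) auto
qed

lemma summable_geometric_majorant:
  fixes g :: "nat \<Rightarrow> real"
  assumes "0 < \<theta>" "\<theta> < 1" "\<And>j. \<bar>g j\<bar> \<le> C * \<theta> ^ nat (int j - m)"
  shows "summable g"
  by (rule summable_comparison_test[OF _ summable_mult[OF summable_power_nat_diff[OF assms(1,2)]]])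
    (use assms(3) in auto)

lemma abs_suminf_geometric_majorant:
  fixes g :: "nat \<Rightarrow> real"
  assumes "0 < \<theta>" "\<theta> < 1" "\<And>j. \<bar>g j\<bar> \<le> C * \<theta> ^ (j + n)"
  shows "\<bar>suminf g\<bar> \<le> C * \<theta> ^ n / (1 - \<theta>)"
proof -
  have majorant: "summable (\<lambda>j. C * \<theta> ^ n * \<theta> ^ j)"
    using assms by (intro summable_mult summable_geometric) auto
  have bound: "\<bar>g j\<bar> \<le> C * \<theta> ^ n * \<theta> ^ j" for j
    using assms(3)[of j] by (simp add: power_add mult_ac)
  have abs_summable: "summable (\<lambda>j. \<bar>g j\<bar>)"
    by (rule summable_comparison_test[OF _ majorant]) (use bound in auto)
  have "\<bar>suminf g\<bar> \<le> (\<Sum>j. \<bar>g j\<bar>)"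
    by (rule summable_rabs[OF abs_summable])
  also have "\<dots> \<le> (\<Sum>j. C * \<theta> ^ n * \<theta> ^ j)"
    by (rule suminf_le[OF bound abs_summable majorant])
  also have "\<dots> = C * \<theta> ^ n / (1 - \<theta>)"
    using assms by (simp add: suminf_mult suminf_geometric divide_simps)
  finally show ?thesis .
qed

lemma tendsto_suminf_geometric_majorant:
  fixes a :: "nat \<Rightarrow> nat \<Rightarrow> real"
  assumes "0 < \<theta>" "\<theta> < 1" "\<And>j. (\<lambda>m. a j m) \<longlonglongrightarrow> b j"
    and "eventually (\<lambda>m. \<forall>j. \<bar>a j m\<bar> \<le> C * \<theta> ^ nat (int j - m0)) sequentially"
  shows "(\<lambda>m. \<Sum>j. a j m) \<longlonglongrightarrow> (\<Sum>j. b j)"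
proof -
  have "eventually (\<lambda>(j::nat, m). \<forall>j. \<bar>a j m\<bar> \<le> C * \<theta> ^ nat (int j - m0)) (at_top \<times>\<^sub>F sequentially)"
    by (subst eventually_prod2) (simp_all add: assms(4))
  then have "eventually (\<lambda>(j, m). norm (a j m) \<le> C * \<theta> ^ nat (int j - m0)) (at_top \<times>\<^sub>F sequentially)"
    by (rule eventually_mono) auto
  then show ?thesis
    using tannerys_theorem[OF assms(3) _ summable_mult[OF summable_power_nat_diff[OF assms(1,2)]]]
    by simp
qed

lemma LIMSEQ_if_dist_less_inverse_Suc:
  fixes X :: "nat \<Rightarrow> 'a::metric_space"
  assumes "\<And>n. dist l (X n) < 1 / real (Suc n)"
  shows "X \<longlonglongrightarrow> l"
proof -
  have "(\<lambda>n. dist (X n) l) \<longlonglongrightarrow> 0"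
  proof (rule Lim_null_comparison)
    show "eventually (\<lambda>n. norm (dist (X n) l) \<le> 1 / real (Suc n)) sequentially"
      using assms by (intro always_eventually allI) (simp add: dist_commute less_imp_le)
    show "(\<lambda>n. 1 / real (Suc n)) \<longlonglongrightarrow> 0"
      using LIMSEQ_inverse_real_of_nat by (simp add: inverse_eq_divide)
  qed
  then show ?thesis
    by (rule tendsto_dist_iff[THEN iffD2])
qed

section \<open>Coordinatewise convergence\<close>

(* Convergence with respect to d_theta, phrased coordinatewise. *)
definition coordwise_limit :: "(nat \<Rightarrow> int \<Rightarrow> nat) \<Rightarrow> (int \<Rightarrow> nat) \<Rightarrow> bool" where
  "coordwise_limit xs x \<longleftrightarrow> (\<forall>i. eventually (\<lambda>m. xs m i = x i) sequentially)"

lemma coordwise_limit_agree: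
  assumes "coordwise_limit xs x"
  shows "eventually (\<lambda>m. agree n (xs m) x) sequentially"
proof -
  have "finite {i::int. \<bar>i\<bar> < int n}"
    by (rule finite_subset[of _ "{- int n..int n}"]) auto
  then have "eventually (\<lambda>m. \<forall>i\<in>{i. \<bar>i\<bar> < int n}. xs m i = x i) sequentially"
    using assms unfolding coordwise_limit_def by (intro eventually_ball_finite) auto
  then show ?thesis
    by (rule eventually_mono) (simp add: agree_def)
qed

lemma coordwise_limit_if_agree:
  assumes "\<And>n. agree n x (xs n)"
  shows "coordwise_limit xs x"
  unfolding coordwise_limit_def eventually_sequentially
proof
  fix i
  show "\<exists>N. \<forall>m\<ge>N. xs m i = x i"
  proof (intro exI allI impI)
    fix m assume "Suc (nat \<bar>i\<bar>) \<le> m"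
    then have "\<bar>i\<bar> < int m" by linarith
    then show "xs m i = x i"
      using assms[of m] by (simp add: agree_def)
  qed
qed

lemma coordwise_limit_subseq:
  assumes "coordwise_limit xs x" "strict_mono r"
  shows "coordwise_limit (\<lambda>m. xs (r m)) x"
  unfolding coordwise_limit_def
proof
  fix i
  show "eventually (\<lambda>m. xs (r m) i = x i) sequentially"
    using eventually_subseq[OF assms(2), of "\<lambda>m. xs m i = x i"] assms(1)
    by (simp add: coordwise_limit_def)
qed

lemma coordwise_limit_eq:
  assumes "coordwise_limit xs x" "coordwise_limit ys y"
    and "eventually (\<lambda>m. xs m i = ys m i) sequentially"
  shows "x i = y i"
proof -
  have "eventually (\<lambda>m. x i = y i) sequentially"
    using assms(3) assms(1,2)[unfolded coordwise_limit_def, THEN spec, of i]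
    by eventually_elim auto
  then show ?thesis by simp
qed

lemma coordwise_limit_unique: "coordwise_limit xs x \<Longrightarrow> coordwise_limit xs y \<Longrightarrow> x = y"
  using coordwise_limit_eq[of xs x xs y] by auto

lemma coordwise_limit_SFT:
  assumes "coordwise_limit xs x" "eventually (\<lambda>m. xs m \<in> SFT k A) sequentially"
  shows "x \<in> SFT k A"
  unfolding SFT_def
proof (intro CollectI allI)
  fix i
  have "eventually (\<lambda>m. xs m \<in> SFT k A \<and> xs m i = x i \<and> xs m (i + 1) = x (i + 1)) sequentially"
    using assms unfolding coordwise_limit_def by (intro eventually_conj) auto
  then obtain m where m: "xs m \<in> SFT k A" "xs m i = x i" "xs m (i + 1) = x (i + 1)"
    using eventually_happens'[OF sequentially_bot] by blast
  then have "xs m i < k \<and> A (xs m i) (xs m (i + 1))"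
    unfolding SFT_def by blast
  then show "x i < k \<and> A (x i) (x (i + 1))"
    using m by simp
qed

lemma coordwise_limit_shift_pow:
  "coordwise_limit xs x \<Longrightarrow> coordwise_limit (\<lambda>m. (shift ^^ j) (xs m)) ((shift ^^ j) x)"
  by (simp add: coordwise_limit_def shift_pow)

lemma coordwise_limit_shift_back:
  "coordwise_limit xs x \<Longrightarrow> coordwise_limit (\<lambda>m. shift_back j (xs m)) (shift_back j x)"
  by (simp add: coordwise_limit_def shift_back_def)

lemma constant_subseq:
  fixes g :: "nat \<Rightarrow> 'v"
  assumes "finite (range g)"
  shows "\<exists>r :: nat \<Rightarrow> nat. \<exists>v. strict_mono r \<and> (\<forall>m. g (r m) = v)"
proof -
  obtain m0 where inf: "infinite {m. g m = g m0}"
    using pigeonhole_infinite[of UNIV g] assms by auto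
  have "strict_mono (enumerate {m. g m = g m0})"
    using inf by (rule strict_mono_enumerate)
  moreover have "\<forall>m. g (enumerate {m. g m = g m0} m) = g m0"
    using enumerate_in_set[OF inf] by simp
  ultimately show ?thesis
    by blast
qed

lemma eventually_constant_subseq:
  fixes W :: "nat \<Rightarrow> 'c::countable \<Rightarrow> 'v"
  assumes "\<And>c. finite (range (\<lambda>m. W m c))"
  obtains r V where "strict_mono r" "\<And>c. eventually (\<lambda>m. W (r m) c = V c) sequentially"
proof -
  let ?P = "\<lambda>n s. \<exists>v. eventually (\<lambda>m. W (s m) (from_nat n) = v) sequentially"
  interpret subseqs ?P
  proof
    fix n and s :: "nat \<Rightarrow> nat"
    have "finite (range (\<lambda>m. W (s m) (from_nat n)))"
      by (rule finite_subset[OF _ assms[of "from_nat n"]]) auto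
    then obtain r :: "nat \<Rightarrow> nat" and v where r: "strict_mono r" and v: "\<forall>m. W (s (r m)) (from_nat n) = v"
      using constant_subseq by blast
    show "\<exists>r. strict_mono r \<and> ?P n (s \<circ> r)"
      by (intro exI[of _ r] conjI exI[of _ v] always_eventually allI) (simp_all add: r v)
  qed
  have stable: "?P n (s \<circ> r)" if r: "strict_mono r" and s: "?P n s" for r s n
    using s eventually_subseq[OF r] by fastforce
  have "?P n diagseq" for n
  proof -
    obtain v where "eventually (\<lambda>m. W ((diagseq \<circ> (+) (Suc n)) m) (from_nat n) = v) sequentially"
      using diagseq_holds[OF stable] by blast
    then have "eventually (\<lambda>m. W (diagseq (m + Suc n)) (from_nat n) = v) sequentially"
      by (rule eventually_mono) (simp add: add.commute)
    then show ?thesis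
      using eventually_sequentially_seg[of "\<lambda>m. W (diagseq m) (from_nat n) = v" "Suc n"] by blast
  qed
  then have "\<exists>v. eventually (\<lambda>m. W (diagseq m) c = v) sequentially" for c
    using from_nat_to_nat[of c] by (metis (no_types))
  then have "\<exists>V. \<forall>c. eventually (\<lambda>m. W (diagseq m) c = V c) sequentially"
    by (intro choice allI)
  then show ?thesis
    using that subseq_diagseq by blast
qed

lemma coordwise_convergent_subseq:
  fixes Y :: "nat \<Rightarrow> nat \<Rightarrow> int \<Rightarrow> nat" and S :: "nat \<Rightarrow> nat \<Rightarrow> bool"
  assumes "\<And>m l i. l \<le> L \<Longrightarrow> Y m l i < k"
  obtains r X where "strict_mono r" "\<And>l. l \<le> L \<Longrightarrow> coordwise_limit (\<lambda>m. Y (r m) l) (X l)"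
    "\<And>l. eventually (\<lambda>m. S (r m) l) sequentially \<or> eventually (\<lambda>m. \<not> S (r m) l) sequentially"
proof -
  define W where "W m c = (if fst c \<le> L then Y m (fst c) (snd c) else 0, S m (fst c))"
    for m and c :: "nat \<times> int"
  have finite: "finite (range (\<lambda>m. W m c))" for c
    by (rule finite_subset[of _ "{..k} \<times> UNIV"]) (auto simp: W_def less_imp_le assms)
  obtain r V where r: "strict_mono r" "\<And>c. eventually (\<lambda>m. W (r m) c = V c) sequentially"
    using eventually_constant_subseq[of W, OF finite] by blast
  show ?thesis
  proof (rule that[OF r(1)])
    fix l assume "l \<le> L"
    show "coordwise_limit (\<lambda>m. Y (r m) l) (\<lambda>i. fst (V (l, i)))"
      unfolding coordwise_limit_def
    proof
      fix i
      show "eventually (\<lambda>m. Y (r m) l i = fst (V (l, i))) sequentially"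
        using r(2)[of "(l, i)"] by eventually_elim (use \<open>l \<le> L\<close> in \<open>auto simp: W_def prod_eq_iff\<close>)
    qed
  next
    fix l
    have "eventually (\<lambda>m. S (r m) l = snd (V (l, 0))) sequentially"
      using r(2)[of "(l, 0)"] by eventually_elim (auto simp: W_def prod_eq_iff)
    then show "eventually (\<lambda>m. S (r m) l) sequentially \<or> eventually (\<lambda>m. \<not> S (r m) l) sequentially"
      by (cases "snd (V (l, 0))") (auto elim: eventually_mono)
  qed
qed

lemma Baire_compactin:
  fixes F :: "nat \<Rightarrow> 'a set"
  assumes K: "compactin X K" "K \<noteq> {}" and "Hausdorff_space X"
    and cover: "K \<subseteq> (\<Union>n. F n)" and closed: "\<And>n. closedin X (F n)"
  obtains n where "subtopology X K interior_of (F n \<inter> K) \<noteq> {}"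
proof -
  let ?XK = "subtopology X K"
  have space: "locally_compact_space ?XK \<and> regular_space ?XK"
    using compact_space_subtopology[OF K(1)] Hausdorff_space_subtopology[OF assms(3)]
    by (simp add: compact_imp_locally_compact_space compact_Hausdorff_imp_regular_space)
  have topspace: "topspace ?XK = K"
    using compactin_subset_topspace[OF K(1)] by (rule topspace_subtopology_subset)
  have union: "(\<Union>n. F n \<inter> K) = topspace ?XK"
    using cover topspace by blast
  have "?XK interior_of topspace ?XK = topspace ?XK"
    by (rule interior_of_topspace)
  then have nonempty: "?XK interior_of (\<Union>n. F n \<inter> K) \<noteq> {}"
    using K(2) by (simp only: union topspace not_False_eq_True)
  have "\<exists>n. ?XK interior_of (F n \<inter> K) \<noteq> {}"
  proof (rule ccontr)
    assume empty: "\<nexists>n. ?XK interior_of (F n \<inter> K) \<noteq> {}"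
    have "?XK interior_of \<Union> (range (\<lambda>n. F n \<inter> K)) = {}"
    proof (rule Baire_category_alt)
      show "completely_metrizable_space ?XK \<or> locally_compact_space ?XK \<and> regular_space ?XK"
        using space by blast
      show "countable (range (\<lambda>n. F n \<inter> K))"
        by simp
      fix T assume "T \<in> range (\<lambda>n. F n \<inter> K)"
      then obtain n where T: "T = F n \<inter> K"
        by blast
      have "closedin ?XK (K \<inter> F n)"
        by (rule closedin_subtopology_Int_closed[OF closed])
      then show "closedin ?XK T \<and> ?XK interior_of T = {}"
        using empty T by (simp add: Int_commute)
    qed
    then show False
      using nonempty by simp
  qed
  then show ?thesis
    using that by blast
qed

lemma regular_closed_openin_subset:
  assumes "X closure_of (X interior_of K) = K" "subtopology X K interior_of S \<noteq> {}"
  obtains U where "openin X U" "U \<noteq> {}" "U \<subseteq> S"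
proof -
  obtain T where T: "openin X T" "subtopology X K interior_of S = T \<inter> K"
    using openin_interior_of[of "subtopology X K" S] unfolding openin_subtopology by blast
  obtain w where w: "w \<in> T" "w \<in> K"
    using assms(2) T(2) by blast
  then have "w \<in> X closure_of (X interior_of K)"
    using assms(1) by simp
  then obtain u where u: "u \<in> X interior_of K" "u \<in> T"
    using T(1) w(1) unfolding in_closure_of by blast
  have "T \<inter> X interior_of K \<subseteq> S"
    using T(2) interior_of_subset[of "subtopology X K" S] interior_of_subset[of X K] by blast
  moreover have "openin X (T \<inter> X interior_of K)"
    using T(1) by (rule openin_Int[OF _ openin_interior_of])
  moreover have "T \<inter> X interior_of K \<noteq> {}"
    using u by blast
  ultimately show ?thesis
    using that by blast
qed

lemma compactin_subset_mono:
  fixes F :: "nat \<Rightarrow> 'a set"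
  assumes "compactin X K" "mono F"
    and local: "\<And>q. q \<in> K \<Longrightarrow> \<exists>V n. openin X V \<and> q \<in> V \<and> V \<subseteq> F n"
  obtains n where "K \<subseteq> F n"
proof -
  let ?\<U> = "{V. openin X V \<and> (\<exists>n. V \<subseteq> F n)}"
  have cover: "K \<subseteq> \<Union>?\<U>"
  proof
    fix q assume "q \<in> K"
    then obtain V n where "openin X V" "q \<in> V" "V \<subseteq> F n"
      using local by blast
    then show "q \<in> \<Union>?\<U>"
      by blast
  qed
  have "\<exists>\<V>. finite \<V> \<and> \<V> \<subseteq> ?\<U> \<and> K \<subseteq> \<Union>\<V>"
    by (intro compactinD[OF assms(1) _ cover]) blast
  then obtain \<V> where \<V>: "finite \<V>" "\<V> \<subseteq> ?\<U>" "K \<subseteq> \<Union>\<V>"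
    by blast
  then have "\<forall>V\<in>\<V>. \<exists>n. V \<subseteq> F n"
    by blast
  then have "\<exists>g. \<forall>V\<in>\<V>. V \<subseteq> F (g V)"
    by (rule bchoice)
  then obtain g where g: "\<And>V. V \<in> \<V> \<Longrightarrow> V \<subseteq> F (g V)"
    by blast
  have "K \<subseteq> F (\<Sum>V\<in>\<V>. g V)"
  proof
    fix q assume "q \<in> K"
    then obtain V where V: "V \<in> \<V>" "q \<in> V"
      using \<V>(3) by blast
    have "g V \<le> (\<Sum>V\<in>\<V>. g V)"
      by (rule member_le_sum[OF V(1)]) (use \<V>(1) in auto)
    then have "F (g V) \<subseteq> F (\<Sum>V\<in>\<V>. g V)"
      by (rule monoD[OF assms(2)])
    then show "q \<in> F (\<Sum>V\<in>\<V>. g V)"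
      using g[OF V(1)] V(2) by blast
  qed
  then show ?thesis
    by (rule that)
qed

section \<open>Lipschitz potentials and cylinder neighbourhoods\<close>

locale lipschitz_potential =
  fixes k :: nat and A :: "nat \<Rightarrow> nat \<Rightarrow> bool" and \<theta> :: real
    and f :: "(int \<Rightarrow> nat) \<Rightarrow> real" and C :: real
  assumes theta_pos: "0 < \<theta>" and theta_less_one: "\<theta> < 1" and C_nonneg: "0 \<le> C"
    and lipschitz: "\<And>x y. x \<in> SFT k A \<Longrightarrow> y \<in> SFT k A \<Longrightarrow> \<bar>f x - f y\<bar> \<le> C * dtheta \<theta> x y"

sublocale lipschitz_potential \<subseteq> Sigma: Metric_space "SFT k A" "dtheta \<theta>"
  by (rule Metric_space_dtheta[OF theta_pos theta_less_one])

context lipschitz_potential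
begin

lemma topspace_SigmaR_top: "topspace (SigmaR_top k A \<theta>) = SFT k A \<times> UNIV"
  by (simp add: SigmaR_top_def)

definition cylinder :: "nat \<Rightarrow> (int \<Rightarrow> nat) \<Rightarrow> real \<Rightarrow> real \<Rightarrow> ((int \<Rightarrow> nat) \<times> real) set" where
  "cylinder n x e t = {y \<in> SFT k A. agree n x y} \<times> ball t e"

lemma openin_agree: "openin Sigma.mtopology {y \<in> SFT k A. agree n x y}"
  unfolding Sigma.openin_mtopology
proof (intro conjI allI impI)
  fix y assume y: "y \<in> {y \<in> SFT k A. agree n x y}"
  have "Sigma.mball y (\<theta> ^ n) \<subseteq> {y \<in> SFT k A. agree n x y}"
  proof
    fix z assume "z \<in> Sigma.mball y (\<theta> ^ n)"
    then have "z \<in> SFT k A" "agree n y z"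
      using dtheta_less_power_iff[OF theta_pos theta_less_one] agree_mono by auto
    then show "z \<in> {y \<in> SFT k A. agree n x y}"
      using y agree_trans by blast
  qed
  then show "\<exists>r>0. Sigma.mball y r \<subseteq> {y \<in> SFT k A. agree n x y}"
    using theta_pos by (intro exI[of _ "\<theta> ^ n"]) auto
qed auto

lemma openin_cylinder: "openin (SigmaR_top k A \<theta>) (cylinder n x e t)"
  unfolding cylinder_def SigmaR_top_def
  by (simp add: openin_prod_Times_iff openin_agree)

lemma openin_contains_cylinder:
  assumes "openin (SigmaR_top k A \<theta>) U" "q \<in> U"
  obtains n e where "0 < e" "cylinder n (fst q) e (snd q) \<subseteq> U"
proof -
  obtain V W where VW: "openin Sigma.mtopology V" "openin euclideanreal W"
      "fst q \<in> V" "snd q \<in> W" "V \<times> W \<subseteq> U"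
    using assms unfolding SigmaR_top_def openin_prod_topology_alt by (metis prod.collapse)
  obtain r where r: "0 < r" "Sigma.mball (fst q) r \<subseteq> V"
    using VW Sigma.openin_mtopology by meson
  obtain n where n: "\<theta> ^ n < r"
    using real_arch_pow_inv[OF r(1) theta_less_one] by blast
  obtain e where e: "0 < e" "ball (snd q) e \<subseteq> W"
    using VW by (meson open_contains_ball open_openin)
  have q: "fst q \<in> SFT k A"
    using VW Sigma.openin_mtopology by blast
  have "cylinder (Suc n) (fst q) e (snd q) \<subseteq> V \<times> W"
  proof (clarsimp simp: cylinder_def)
    fix y s assume "y \<in> SFT k A" "agree (Suc n) (fst q) y" "dist (snd q) s < e"
    then have "dtheta \<theta> (fst q) y < \<theta> ^ n"
      using dtheta_less_power_iff[OF theta_pos theta_less_one] by blast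
    then have "y \<in> Sigma.mball (fst q) r" "s \<in> ball (snd q) e"
      using q n \<open>y \<in> SFT k A\<close> \<open>dist (snd q) s < e\<close> by auto
    then show "y \<in> V \<and> s \<in> W"
      using r e by blast
  qed
  then show ?thesis using that e VW(5) by blast
qed

lemma Hausdorff_SigmaR_top: "Hausdorff_space (SigmaR_top k A \<theta>)"
  unfolding SigmaR_top_def
  by (simp add: Hausdorff_space_prod_topology Sigma.Hausdorff_space_mtopology)

lemma closedin_SigmaR_top_if_sequentially:
  assumes sub: "B \<subseteq> SFT k A \<times> UNIV"
    and lim: "\<And>Q q. (\<And>n. Q n \<in> B) \<Longrightarrow> coordwise_limit (\<lambda>n. fst (Q n)) (fst q) \<Longrightarrow>
      (\<lambda>n. snd (Q n)) \<longlonglongrightarrow> snd q \<Longrightarrow> q \<in> B"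
  shows "closedin (SigmaR_top k A \<theta>) B"
  unfolding closedin_def topspace_SigmaR_top
proof (intro conjI sub)
  show "openin (SigmaR_top k A \<theta>) (SFT k A \<times> UNIV - B)"
  proof (subst openin_subopen, intro ballI)
    fix q assume q: "q \<in> SFT k A \<times> UNIV - B"
    have "\<exists>n. cylinder n (fst q) (1 / real (Suc n)) (snd q) \<inter> B = {}"
    proof (rule ccontr)
      assume "\<nexists>n. cylinder n (fst q) (1 / real (Suc n)) (snd q) \<inter> B = {}"
      then have "\<forall>n. \<exists>q'. q' \<in> cylinder n (fst q) (1 / real (Suc n)) (snd q) \<inter> B"
        by blast
      then obtain Q where Q: "\<And>n. Q n \<in> cylinder n (fst q) (1 / real (Suc n)) (snd q) \<inter> B"
        by metis
      have "coordwise_limit (\<lambda>n. fst (Q n)) (fst q)"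
        using Q by (intro coordwise_limit_if_agree) (auto simp: cylinder_def mem_Times_iff)
      moreover have "(\<lambda>n. snd (Q n)) \<longlonglongrightarrow> snd q"
        using Q by (intro LIMSEQ_if_dist_less_inverse_Suc) (auto simp: cylinder_def mem_Times_iff)
      ultimately have "q \<in> B"
        using Q lim by blast
      then show False
        using q by blast
    qed
    then obtain n where n: "cylinder n (fst q) (1 / real (Suc n)) (snd q) \<inter> B = {}"
      by blast
    let ?T = "cylinder n (fst q) (1 / real (Suc n)) (snd q)"
    have "q \<in> ?T"
      using q by (cases q) (simp add: cylinder_def)
    moreover have "?T \<subseteq> SFT k A \<times> UNIV - B"
      using n by (auto simp: cylinder_def)
    ultimately show "\<exists>T. openin (SigmaR_top k A \<theta>) T \<and> q \<in> T \<and> T \<subseteq> SFT k A \<times> UNIV - B"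
      using openin_cylinder by (intro exI[of _ ?T]) simp
  qed
qed

section \<open>Time offsets along stable and unstable legs\<close>

definition stable_offset :: "(int \<Rightarrow> nat) \<Rightarrow> (int \<Rightarrow> nat) \<Rightarrow> real" where
  "stable_offset x y = (\<Sum>j. f ((shift ^^ j) x) - f ((shift ^^ j) y))"

definition unstable_offset :: "(int \<Rightarrow> nat) \<Rightarrow> (int \<Rightarrow> nat) \<Rightarrow> real" where
  "unstable_offset x y = (\<Sum>j. f (shift_back (Suc j) y) - f (shift_back (Suc j) x))"

lemma lipschitz_agree:
  assumes "x \<in> SFT k A" "y \<in> SFT k A" "agree n x y"
  shows "\<bar>f x - f y\<bar> \<le> C * \<theta> ^ n"
proof -
  have "dtheta \<theta> x y \<le> \<theta> ^ n"
    using assms(3) dtheta_le_power_iff[OF theta_pos theta_less_one] by blast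
  then show ?thesis
    using lipschitz[OF assms(1,2)] C_nonneg by (meson mult_left_mono order_trans)
qed

lemma f_tendsto_coordwise:
  assumes "coordwise_limit xs x" "eventually (\<lambda>m. xs m \<in> SFT k A) sequentially" "x \<in> SFT k A"
  shows "(\<lambda>m. f (xs m)) \<longlonglongrightarrow> f x"
proof (rule tendstoI)
  fix e :: real assume "0 < e"
  have "(\<lambda>n. C * \<theta> ^ n) \<longlonglongrightarrow> 0"
    using theta_pos theta_less_one by (intro tendsto_mult_right_zero LIMSEQ_power_zero) auto
  then obtain n where n: "C * \<theta> ^ n < e"
    using eventually_happens'[OF sequentially_bot order_tendstoD(2)[OF _ \<open>0 < e\<close>]] by blast
  show "eventually (\<lambda>m. dist (f (xs m)) (f x) < e) sequentially"
    using coordwise_limit_agree[OF assms(1), of n] assms(2)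
  proof eventually_elim
    case (elim m)
    then have "\<bar>f (xs m) - f x\<bar> \<le> C * \<theta> ^ n"
      using lipschitz_agree assms(3) by blast
    then show ?case
      using n by (simp add: dist_real_def)
  qed
qed

lemma stable_term_bound:
  assumes "x \<in> SFT k A" "y \<in> SFT k A" "\<And>i. m \<le> i \<Longrightarrow> y i = x i"
  shows "\<bar>f ((shift ^^ j) x) - f ((shift ^^ j) y)\<bar> \<le> C * \<theta> ^ nat (int j - m)"
proof (rule lipschitz_agree)
  show "agree (nat (int j - m)) ((shift ^^ j) x) ((shift ^^ j) y)"
    unfolding agree_def shift_pow using assms(3) by auto
qed (use assms shift_pow_SFT in auto)

lemma unstable_term_bound:
  assumes "x \<in> SFT k A" "y \<in> SFT k A" "\<And>i. i \<le> m \<Longrightarrow> y i = x i"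
  shows "\<bar>f (shift_back (Suc j) y) - f (shift_back (Suc j) x)\<bar> \<le> C * \<theta> ^ nat (int j + m)"
proof (rule lipschitz_agree)
  show "agree (nat (int j + m)) (shift_back (Suc j) y) (shift_back (Suc j) x)"
    unfolding agree_def shift_back_def using assms(3) by auto
qed (use assms shift_back_SFT in auto)

lemma birk_tendsto_stable_offset:
  assumes "x \<in> SFT k A" "y \<in> SFT k A" "\<And>i. m \<le> i \<Longrightarrow> y i = x i"
  shows "(\<lambda>n. birk f n x - birk f n y) \<longlonglongrightarrow> stable_offset x y"
proof -
  have "(\<lambda>n. birk f n x - birk f n y) = (\<lambda>n. \<Sum>j<n. f ((shift ^^ j) x) - f ((shift ^^ j) y))"
    unfolding birk_def by (simp add: sum_subtractf)
  then show ?thesis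
    unfolding stable_offset_def
    using summable_LIMSEQ[OF summable_geometric_majorant[OF theta_pos theta_less_one
          stable_term_bound[OF assms]]]
    by simp
qed

lemma birk_tendsto_unstable_offset:
  assumes "x \<in> SFT k A" "y \<in> SFT k A" "\<And>i. i \<le> m \<Longrightarrow> y i = x i"
  shows "(\<lambda>n. birk f n (shift_back n y) - birk f n (shift_back n x)) \<longlonglongrightarrow> unstable_offset x y"
proof -
  have "(\<lambda>n. birk f n (shift_back n y) - birk f n (shift_back n x)) =
      (\<lambda>n. \<Sum>j<n. f (shift_back (Suc j) y) - f (shift_back (Suc j) x))"
    unfolding birk_shift_back by (simp add: sum_subtractf)
  moreover have "\<bar>f (shift_back (Suc j) y) - f (shift_back (Suc j) x)\<bar> \<le> C * \<theta> ^ nat (int j - - m)" for j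
    using unstable_term_bound[OF assms] by simp
  then have "summable (\<lambda>j. f (shift_back (Suc j) y) - f (shift_back (Suc j) x))"
    by (rule summable_geometric_majorant[OF theta_pos theta_less_one])
  ultimately show ?thesis
    unfolding unstable_offset_def using summable_LIMSEQ by simp
qed

lemma abs_stable_offset_le:
  assumes "x \<in> SFT k A" "y \<in> SFT k A" "\<And>i. - int n \<le> i \<Longrightarrow> y i = x i"
  shows "\<bar>stable_offset x y\<bar> \<le> C * \<theta> ^ n / (1 - \<theta>)"
  unfolding stable_offset_def
proof (rule abs_suminf_geometric_majorant[OF theta_pos theta_less_one])
  fix j
  have "nat (int j - - int n) = j + n"
    by simp
  then show "\<bar>f ((shift ^^ j) x) - f ((shift ^^ j) y)\<bar> \<le> C * \<theta> ^ (j + n)"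
    using stable_term_bound[OF assms(1,2), of "- int n" j] assms(3) by simp
qed

lemma abs_unstable_offset_le:
  assumes "x \<in> SFT k A" "y \<in> SFT k A" "\<And>i. i \<le> int n \<Longrightarrow> y i = x i"
  shows "\<bar>unstable_offset x y\<bar> \<le> C * \<theta> ^ n / (1 - \<theta>)"
  unfolding unstable_offset_def
proof (rule abs_suminf_geometric_majorant[OF theta_pos theta_less_one])
  fix j
  have "nat (int j + int n) = j + n"
    by simp
  then show "\<bar>f (shift_back (Suc j) y) - f (shift_back (Suc j) x)\<bar> \<le> C * \<theta> ^ (j + n)"
    using unstable_term_bound[OF assms(1,2), of "int n" j] assms(3) by simp
qed

lemma stable_offset_swap:
  assumes "x \<in> SFT k A" "y \<in> SFT k A" "\<And>i. m \<le> i \<Longrightarrow> y i = x i"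
  shows "stable_offset y x = - stable_offset x y"
  unfolding stable_offset_def
  using suminf_minus[OF summable_geometric_majorant[OF theta_pos theta_less_one
        stable_term_bound[OF assms]]]
  by simp

lemma unstable_offset_swap:
  assumes "x \<in> SFT k A" "y \<in> SFT k A" "\<And>i. i \<le> m \<Longrightarrow> y i = x i"
  shows "unstable_offset y x = - unstable_offset x y"
proof -
  have "\<bar>f (shift_back (Suc j) y) - f (shift_back (Suc j) x)\<bar> \<le> C * \<theta> ^ nat (int j - - m)" for j
    using unstable_term_bound[OF assms] by simp
  then have summable: "summable (\<lambda>j. f (shift_back (Suc j) y) - f (shift_back (Suc j) x))"
    by (rule summable_geometric_majorant[OF theta_pos theta_less_one])
  show ?thesis
    unfolding unstable_offset_def using suminf_minus[OF summable] by simp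
qed

lemma stable_offset_tendsto:
  assumes "coordwise_limit xs x" "coordwise_limit ys y" "x \<in> SFT k A" "y \<in> SFT k A"
    and "eventually (\<lambda>m. xs m \<in> SFT k A \<and> ys m \<in> SFT k A \<and> (\<forall>i\<ge>n. ys m i = xs m i)) sequentially"
  shows "(\<lambda>m. stable_offset (xs m) (ys m)) \<longlonglongrightarrow> stable_offset x y"
  unfolding stable_offset_def
proof (rule tendsto_suminf_geometric_majorant[OF theta_pos theta_less_one])
  fix j
  have "eventually (\<lambda>m. (shift ^^ j) (xs m) \<in> SFT k A) sequentially"
    "eventually (\<lambda>m. (shift ^^ j) (ys m) \<in> SFT k A) sequentially"
    using assms(5) by (eventually_elim, simp add: shift_pow_SFT)+
  then show "(\<lambda>m. f ((shift ^^ j) (xs m)) - f ((shift ^^ j) (ys m)))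
      \<longlonglongrightarrow> f ((shift ^^ j) x) - f ((shift ^^ j) y)"
    by (intro tendsto_diff f_tendsto_coordwise coordwise_limit_shift_pow assms(1,2)
        shift_pow_SFT assms(3,4))
next
  show "eventually (\<lambda>m. \<forall>j. \<bar>f ((shift ^^ j) (xs m)) - f ((shift ^^ j) (ys m))\<bar>
      \<le> C * \<theta> ^ nat (int j - n)) sequentially"
    using assms(5) by eventually_elim (simp add: stable_term_bound)
qed

lemma unstable_offset_tendsto:
  assumes "coordwise_limit xs x" "coordwise_limit ys y" "x \<in> SFT k A" "y \<in> SFT k A"
    and "eventually (\<lambda>m. xs m \<in> SFT k A \<and> ys m \<in> SFT k A \<and> (\<forall>i\<le>n. ys m i = xs m i)) sequentially"
  shows "(\<lambda>m. unstable_offset (xs m) (ys m)) \<longlonglongrightarrow> unstable_offset x y"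
  unfolding unstable_offset_def
proof (rule tendsto_suminf_geometric_majorant[OF theta_pos theta_less_one])
  fix j
  have "eventually (\<lambda>m. shift_back (Suc j) (xs m) \<in> SFT k A) sequentially"
    "eventually (\<lambda>m. shift_back (Suc j) (ys m) \<in> SFT k A) sequentially"
    using assms(5) by (eventually_elim, simp add: shift_back_SFT)+
  then show "(\<lambda>m. f (shift_back (Suc j) (ys m)) - f (shift_back (Suc j) (xs m)))
      \<longlonglongrightarrow> f (shift_back (Suc j) y) - f (shift_back (Suc j) x)"
    by (intro tendsto_diff f_tendsto_coordwise coordwise_limit_shift_back assms(1,2)
        shift_back_SFT assms(3,4))
next
  show "eventually (\<lambda>m. \<forall>j. \<bar>f (shift_back (Suc j) (ys m)) - f (shift_back (Suc j) (xs m))\<bar>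
      \<le> C * \<theta> ^ nat (int j - - n)) sequentially"
    using assms(5) by eventually_elim (simp add: unstable_term_bound)
qed

lemma Wsn_iff_offset:
  assumes "x \<in> SFT k A"
  shows "(y, s) \<in> Wsn k A f n (x, r) \<longleftrightarrow>
    y \<in> SFT k A \<and> (\<forall>i\<ge>n. y i = x i) \<and> s = r + stable_offset x y"
proof
  assume "(y, s) \<in> Wsn k A f n (x, r)"
  then have y: "y \<in> SFT k A" and agr: "\<forall>i\<ge>n. y i = x i"
    and lim: "(\<lambda>m. birk f m x - birk f m y) \<longlonglongrightarrow> s - r"
    by (auto simp: Wsn_def Ws_def)
  have "(\<lambda>m. birk f m x - birk f m y) \<longlonglongrightarrow> stable_offset x y"
    by (rule birk_tendsto_stable_offset[OF assms y]) (use agr in auto)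
  then show "y \<in> SFT k A \<and> (\<forall>i\<ge>n. y i = x i) \<and> s = r + stable_offset x y"
    using LIMSEQ_unique[OF lim] y agr by fastforce
next
  assume h: "y \<in> SFT k A \<and> (\<forall>i\<ge>n. y i = x i) \<and> s = r + stable_offset x y"
  then have "(\<lambda>m. birk f m x - birk f m y) \<longlonglongrightarrow> s - r"
    using birk_tendsto_stable_offset[OF assms, of y n] by auto
  then show "(y, s) \<in> Wsn k A f n (x, r)"
    using h by (auto simp: Wsn_def Ws_def)
qed

lemma Wun_iff_offset:
  assumes "x \<in> SFT k A"
  shows "(y, s) \<in> Wun k A f n (x, r) \<longleftrightarrow>
    y \<in> SFT k A \<and> (\<forall>i\<le>-n. y i = x i) \<and> s = r + unstable_offset x y"
proof
  assume "(y, s) \<in> Wun k A f n (x, r)"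
  then have y: "y \<in> SFT k A" and agr: "\<forall>i\<le>-n. y i = x i"
    and lim: "(\<lambda>m. birk f m (shift_back m y) - birk f m (shift_back m x)) \<longlonglongrightarrow> s - r"
    by (auto simp: Wun_def Wu_def)
  have "(\<lambda>m. birk f m (shift_back m y) - birk f m (shift_back m x)) \<longlonglongrightarrow> unstable_offset x y"
    by (rule birk_tendsto_unstable_offset[OF assms y]) (use agr in auto)
  then show "y \<in> SFT k A \<and> (\<forall>i\<le>-n. y i = x i) \<and> s = r + unstable_offset x y"
    using LIMSEQ_unique[OF lim] y agr by fastforce
next
  assume h: "y \<in> SFT k A \<and> (\<forall>i\<le>-n. y i = x i) \<and> s = r + unstable_offset x y"
  then have "(\<lambda>m. birk f m (shift_back m y) - birk f m (shift_back m x)) \<longlonglongrightarrow> s - r"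
    using birk_tendsto_unstable_offset[OF assms, of y "-n"] by auto
  then show "(y, s) \<in> Wun k A f n (x, r)"
    using h by (auto simp: Wun_def Wu_def)
qed

definition us_stepN :: "nat \<Rightarrow> (int \<Rightarrow> nat) \<times> real \<Rightarrow> (int \<Rightarrow> nat) \<times> real \<Rightarrow> bool" where
  "us_stepN M a b \<longleftrightarrow> b \<in> Wsn k A f (int M) a \<union> Wun k A f (int M) a"

lemma ACN_us_stepN: "ACN k A f N p = {q. \<exists>j\<le>N. (us_stepN N ^^ j) p q}"
  unfolding ACN_def us_stepN_def[abs_def] ..

lemma us_stepN_SFT: "us_stepN M a b \<Longrightarrow> fst b \<in> SFT k A"
  unfolding us_stepN_def Wsn_def Wun_def Ws_def Wu_def by auto

lemma relpowp_us_stepN_SFT: "fst a \<in> SFT k A \<Longrightarrow> (us_stepN M ^^ j) a b \<Longrightarrow> fst b \<in> SFT k A"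
  by (cases j) (auto elim: relpowp_Suc_E dest: us_stepN_SFT)

lemma us_stepN_mono: "M \<le> M' \<Longrightarrow> us_stepN M a b \<Longrightarrow> us_stepN M' a b"
  unfolding us_stepN_def Wsn_def Wun_def by auto

lemma relpowp_us_stepN_mono:
  assumes "M \<le> M'" "(us_stepN M ^^ j) a b"
  shows "(us_stepN M' ^^ j) a b"
  using assms(2) by (rule relpowp_mono[rotated]) (rule us_stepN_mono[OF assms(1)])

lemma us_stepN_refl: "fst a \<in> SFT k A \<Longrightarrow> us_stepN M a a"
  by (cases a) (simp add: us_stepN_def Wsn_iff_offset stable_offset_def)

lemma us_stepN_sym:
  assumes "fst a \<in> SFT k A" "us_stepN M a b"
  shows "us_stepN M b a"
proof -
  obtain x r y s where ab: "a = (x, r)" "b = (y, s)"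
    by fastforce
  have x: "x \<in> SFT k A"
    using assms(1) ab by simp
  from assms(2) consider "(y, s) \<in> Wsn k A f (int M) (x, r)" | "(y, s) \<in> Wun k A f (int M) (x, r)"
    unfolding us_stepN_def ab by blast
  then show ?thesis
  proof cases
    case 1
    then have y: "y \<in> SFT k A" and agr: "\<forall>i\<ge>int M. y i = x i"
      and s: "s = r + stable_offset x y"
      using Wsn_iff_offset[OF x] by auto
    have "stable_offset y x = - stable_offset x y"
      by (rule stable_offset_swap[OF x y]) (use agr in auto)
    then have "(x, r) \<in> Wsn k A f (int M) (y, s)"
      using Wsn_iff_offset[OF y] x agr s by auto
    then show ?thesis
      unfolding us_stepN_def ab by blast
  next
    case 2
    then have y: "y \<in> SFT k A" and agr: "\<forall>i\<le>- int M. y i = x i"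
      and s: "s = r + unstable_offset x y"
      using Wun_iff_offset[OF x] by auto
    have "unstable_offset y x = - unstable_offset x y"
      by (rule unstable_offset_swap[OF x y]) (use agr in auto)
    then have "(x, r) \<in> Wun k A f (int M) (y, s)"
      using Wun_iff_offset[OF y] x agr s by auto
    then show ?thesis
      unfolding us_stepN_def ab by blast
  qed
qed

lemma relpowp_us_stepN_sym:
  assumes "fst a \<in> SFT k A" "(us_stepN M ^^ j) a b"
  shows "(us_stepN M ^^ j) b a"
  using assms(2)
proof (induction j arbitrary: b)
  case 0
  then show ?case by simp
next
  case (Suc j)
  then obtain c where c: "(us_stepN M ^^ j) a c" "us_stepN M c b"
    by (meson relpowp_Suc_E)
  have "us_stepN M b c"
    using us_stepN_sym[OF relpowp_us_stepN_SFT[OF assms(1) c(1)] c(2)] .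
  then show ?case
    using Suc.IH[OF c(1)] by (rule relpowp_Suc_I2)
qed

lemma us_stepN_vshift: "us_stepN M a b \<Longrightarrow> us_stepN M (vshift \<tau> a) (vshift \<tau> b)"
  unfolding us_stepN_def Wsn_def Wun_def Ws_def Wu_def vshift_def by (auto split: prod.splits)

lemma relpowp_us_stepN_vshift:
  "(us_stepN M ^^ j) a b \<Longrightarrow> (us_stepN M ^^ j) (vshift \<tau> a) (vshift \<tau> b)"
proof (induction j arbitrary: b)
  case 0
  then show ?case by simp
next
  case (Suc j)
  then obtain c where "(us_stepN M ^^ j) a c" "us_stepN M c b"
    by (meson relpowp_Suc_E)
  then show ?case
    using Suc.IH us_stepN_vshift by (meson relpowp_Suc_I)
qed

lemma ACN_iff_relpowp:
  assumes "fst p \<in> SFT k A"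
  shows "q \<in> ACN k A f N p \<longleftrightarrow> (us_stepN N ^^ N) p q"
proof
  assume "q \<in> ACN k A f N p"
  then obtain j where j: "j \<le> N" "(us_stepN N ^^ j) p q"
    by (auto simp: ACN_us_stepN)
  have "(us_stepN N ^^ n) q q" for n
    using us_stepN_refl[OF relpowp_us_stepN_SFT[OF assms j(2)]]
    by (induction n) (auto intro: relpowp_Suc_I)
  then have "(us_stepN N ^^ (j + (N - j))) p q"
    using j(2) by (blast intro: relpowp_trans)
  then show "(us_stepN N ^^ N) p q"
    using j(1) by simp
next
  assume "(us_stepN N ^^ N) p q"
  then show "q \<in> ACN k A f N p"
    by (auto simp: ACN_us_stepN)
qed

lemma ACN_trans:
  assumes "a \<in> ACN k A f N p" "(us_stepN M ^^ j) a b"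
  shows "b \<in> ACN k A f (N + M + j) p"
proof -
  obtain i where i: "i \<le> N" "(us_stepN N ^^ i) p a"
    using assms(1) by (auto simp: ACN_us_stepN)
  have "(us_stepN (N + M + j) ^^ i) p a"
    by (rule relpowp_us_stepN_mono[OF _ i(2)]) simp
  moreover have "(us_stepN (N + M + j) ^^ j) a b"
    by (rule relpowp_us_stepN_mono[OF _ assms(2)]) simp
  ultimately have "(us_stepN (N + M + j) ^^ (i + j)) p b"
    by (rule relpowp_trans)
  moreover have "i + j \<le> N + M + j"
    using i(1) by simp
  ultimately show ?thesis
    unfolding ACN_us_stepN by blast
qed

lemma mono_ACN: "mono (\<lambda>N. ACN k A f N p)"
proof (rule monoI, rule subsetI)
  fix N N' q assume N: "N \<le> N'" and "q \<in> ACN k A f N p"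
  then obtain j where j: "j \<le> N" "(us_stepN N ^^ j) p q"
    by (auto simp: ACN_us_stepN)
  then have "(us_stepN N' ^^ j) p q"
    using relpowp_us_stepN_mono[OF N] by blast
  then show "q \<in> ACN k A f N' p"
    using j(1) N unfolding ACN_us_stepN by (auto intro!: exI[of _ j])
qed

lemma us_stepN_if_Ws_Wu:
  assumes "b \<in> Ws k A f a \<union> Wu k A f a"
  obtains M where "us_stepN M a b"
proof -
  from assms consider m where "b \<in> Ws k A f a" "\<forall>i\<ge>m. fst b i = fst a i"
    | m where "b \<in> Wu k A f a" "\<forall>i\<le>m. fst b i = fst a i"
    by (auto simp: Ws_def Wu_def split: prod.splits)
  then show ?thesis
  proof cases
    case (1 m)
    then have "b \<in> Wsn k A f (int (nat \<bar>m\<bar>)) a"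
      by (auto simp: Wsn_def)
    then show ?thesis
      using that unfolding us_stepN_def by blast
  next
    case (2 m)
    then have "b \<in> Wun k A f (int (nat \<bar>m\<bar>)) a"
      by (auto simp: Wun_def)
    then show ?thesis
      using that unfolding us_stepN_def by blast
  qed
qed

lemma AC_imp_ACN:
  assumes "q \<in> AC k A f p"
  obtains N where "q \<in> ACN k A f N p"
proof -
  have "(\<lambda>a b. b \<in> Ws k A f a \<union> Wu k A f a)\<^sup>*\<^sup>* p q"
    using assms by (simp add: AC_def)
  then have "\<exists>M j. (us_stepN M ^^ j) p q"
  proof (induction rule: rtranclp_induct)
    case base
    show ?case by (meson relpowp_0_I)
  next
    case (step b c)
    obtain M j where "(us_stepN M ^^ j) p b"
      using step.IH by blast
    then have "(us_stepN (M + M') ^^ j) p b" for M'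
      by (rule relpowp_us_stepN_mono[rotated]) simp
    moreover obtain M' where "us_stepN M' b c"
      using us_stepN_if_Ws_Wu[where a = b and b = c] step.hyps(2) by blast
    then have "us_stepN (M + M') b c"
      by (rule us_stepN_mono[rotated]) simp
    ultimately show ?case
      by (meson relpowp_Suc_I)
  qed
  then obtain M j where "(us_stepN M ^^ j) p q"
    by blast
  moreover have "p \<in> ACN k A f 0 p"
    by (simp add: ACN_us_stepN)
  ultimately have "q \<in> ACN k A f (0 + M + j) p"
    using ACN_trans by blast
  then show ?thesis
    by (rule that)
qed

section \<open>Closedness of \<open>AC\<^sub>N(p)\<close>\<close>

lemma Wsn_limit:
  assumes "coordwise_limit xs x" "coordwise_limit ys y" "rs \<longlonglongrightarrow> r"
    and "eventually (\<lambda>m. xs m \<in> SFT k A \<and> (ys m, ss m) \<in> Wsn k A f n (xs m, rs m)) sequentially"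
  shows "ss \<longlonglongrightarrow> r + stable_offset x y \<and> (y, r + stable_offset x y) \<in> Wsn k A f n (x, r)"
proof -
  have ev: "eventually (\<lambda>m. xs m \<in> SFT k A \<and> ys m \<in> SFT k A \<and> (\<forall>i\<ge>n. ys m i = xs m i)
      \<and> ss m = rs m + stable_offset (xs m) (ys m)) sequentially"
    using assms(4) by eventually_elim (use Wsn_iff_offset in blast)
  have x: "x \<in> SFT k A"
    by (rule coordwise_limit_SFT[OF assms(1)]) (use ev in \<open>eventually_elim, blast\<close>)
  have y: "y \<in> SFT k A"
    by (rule coordwise_limit_SFT[OF assms(2)]) (use ev in \<open>eventually_elim, blast\<close>)
  have agr: "\<forall>i\<ge>n. y i = x i"
  proof (intro allI impI)
    fix i assume i: "n \<le> i"
    from ev have "eventually (\<lambda>m. ys m i = xs m i) sequentially"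
      by eventually_elim (use i in blast)
    then show "y i = x i"
      by (rule coordwise_limit_eq[OF assms(2,1)])
  qed
  have "eventually (\<lambda>m. xs m \<in> SFT k A \<and> ys m \<in> SFT k A \<and> (\<forall>i\<ge>n. ys m i = xs m i)) sequentially"
    using ev by eventually_elim blast
  then have "(\<lambda>m. stable_offset (xs m) (ys m)) \<longlonglongrightarrow> stable_offset x y"
    by (rule stable_offset_tendsto[OF assms(1,2) x y])
  then have "(\<lambda>m. rs m + stable_offset (xs m) (ys m)) \<longlonglongrightarrow> r + stable_offset x y"
    by (rule tendsto_add[OF assms(3)])
  then have "ss \<longlonglongrightarrow> r + stable_offset x y"
    by (rule Lim_transform_eventually) (use ev in \<open>rule eventually_mono, simp\<close>)
  then show ?thesis
    using Wsn_iff_offset[OF x] y agr by simp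
qed

lemma Wun_limit:
  assumes "coordwise_limit xs x" "coordwise_limit ys y" "rs \<longlonglongrightarrow> r"
    and "eventually (\<lambda>m. xs m \<in> SFT k A \<and> (ys m, ss m) \<in> Wun k A f n (xs m, rs m)) sequentially"
  shows "ss \<longlonglongrightarrow> r + unstable_offset x y \<and> (y, r + unstable_offset x y) \<in> Wun k A f n (x, r)"
proof -
  have ev: "eventually (\<lambda>m. xs m \<in> SFT k A \<and> ys m \<in> SFT k A \<and> (\<forall>i\<le>-n. ys m i = xs m i)
      \<and> ss m = rs m + unstable_offset (xs m) (ys m)) sequentially"
    using assms(4) by eventually_elim (use Wun_iff_offset in blast)
  have x: "x \<in> SFT k A"
    by (rule coordwise_limit_SFT[OF assms(1)]) (use ev in \<open>eventually_elim, blast\<close>)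
  have y: "y \<in> SFT k A"
    by (rule coordwise_limit_SFT[OF assms(2)]) (use ev in \<open>eventually_elim, blast\<close>)
  have agr: "\<forall>i\<le>-n. y i = x i"
  proof (intro allI impI)
    fix i assume i: "i \<le> -n"
    from ev have "eventually (\<lambda>m. ys m i = xs m i) sequentially"
      by eventually_elim (use i in blast)
    then show "y i = x i"
      by (rule coordwise_limit_eq[OF assms(2,1)])
  qed
  have "eventually (\<lambda>m. xs m \<in> SFT k A \<and> ys m \<in> SFT k A \<and> (\<forall>i\<le>-n. ys m i = xs m i)) sequentially"
    using ev by eventually_elim blast
  then have "(\<lambda>m. unstable_offset (xs m) (ys m)) \<longlonglongrightarrow> unstable_offset x y"
    by (rule unstable_offset_tendsto[OF assms(1,2) x y])
  then have "(\<lambda>m. rs m + unstable_offset (xs m) (ys m)) \<longlonglongrightarrow> r + unstable_offset x y"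
    by (rule tendsto_add[OF assms(3)])
  then have "ss \<longlonglongrightarrow> r + unstable_offset x y"
    by (rule Lim_transform_eventually) (use ev in \<open>rule eventually_mono, simp\<close>)
  then show ?thesis
    using Wun_iff_offset[OF x] y agr by simp
qed

lemma us_stepN_limit:
  assumes "coordwise_limit xs x" "coordwise_limit ys y" "rs \<longlonglongrightarrow> r"
    and "eventually (\<lambda>m. xs m \<in> SFT k A) sequentially"
    and "\<And>m. us_stepN M (xs m, rs m) (ys m, ss m)"
    and "eventually (\<lambda>m. (ys m, ss m) \<in> Wsn k A f (int M) (xs m, rs m)) sequentially
      \<or> eventually (\<lambda>m. (ys m, ss m) \<notin> Wsn k A f (int M) (xs m, rs m)) sequentially"
  shows "\<exists>s. ss \<longlonglongrightarrow> s \<and> us_stepN M (x, r) (y, s)"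
  using assms(6)
proof
  assume "eventually (\<lambda>m. (ys m, ss m) \<in> Wsn k A f (int M) (xs m, rs m)) sequentially"
  with assms(4) have "eventually (\<lambda>m. xs m \<in> SFT k A \<and> (ys m, ss m) \<in> Wsn k A f (int M) (xs m, rs m)) sequentially"
    by (rule eventually_conj)
  then show ?thesis
    using Wsn_limit[OF assms(1-3)] unfolding us_stepN_def by blast
next
  assume "eventually (\<lambda>m. (ys m, ss m) \<notin> Wsn k A f (int M) (xs m, rs m)) sequentially"
  with assms(4) have "eventually (\<lambda>m. xs m \<in> SFT k A \<and> (ys m, ss m) \<in> Wun k A f (int M) (xs m, rs m)) sequentially"
    by eventually_elim (use assms(5) in \<open>auto simp: us_stepN_def\<close>)
  then show ?thesis
    using Wun_limit[OF assms(1-3)] unfolding us_stepN_def by blast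
qed

lemma relpowp_us_stepN_limit:
  fixes P :: "nat \<Rightarrow> nat \<Rightarrow> (int \<Rightarrow> nat) \<times> real"
  assumes p: "fst p \<in> SFT k A" and start: "\<And>m. P m 0 = p"
    and steps: "\<And>m l. l < L \<Longrightarrow> us_stepN M (P m l) (P m (Suc l))"
    and corners: "\<And>l. l \<le> L \<Longrightarrow> coordwise_limit (\<lambda>m. fst (P m l)) (X l)"
    and legs: "\<And>l. l < L \<Longrightarrow> eventually (\<lambda>m. P m (Suc l) \<in> Wsn k A f (int M) (P m l)) sequentially
      \<or> eventually (\<lambda>m. P m (Suc l) \<notin> Wsn k A f (int M) (P m l)) sequentially"
  shows "\<exists>s. (\<lambda>m. snd (P m L)) \<longlonglongrightarrow> s \<and> (us_stepN M ^^ L) p (X L, s)"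
  using steps corners legs
proof (induction L)
  case 0
  have "coordwise_limit (\<lambda>m. fst p) (X 0)" "coordwise_limit (\<lambda>m. fst p) (fst p)"
    using "0.prems"(2)[of 0] start by (simp_all add: coordwise_limit_def)
  then have "X 0 = fst p"
    by (rule coordwise_limit_unique)
  then show ?case
    using start by (intro exI[of _ "snd p"]) simp
next
  case (Suc L)
  have "\<exists>s. (\<lambda>m. snd (P m L)) \<longlonglongrightarrow> s \<and> (us_stepN M ^^ L) p (X L, s)"
    by (rule Suc.IH) (use Suc.prems in simp_all)
  then obtain s where s: "(\<lambda>m. snd (P m L)) \<longlonglongrightarrow> s" "(us_stepN M ^^ L) p (X L, s)"
    by blast
  have "(us_stepN M ^^ L) p (P m L)" for m
    unfolding relpowp_fun_conv using start Suc.prems(1) by (intro exI[of _ "P m"]) simp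
  then have "eventually (\<lambda>m. fst (P m L) \<in> SFT k A) sequentially"
    using relpowp_us_stepN_SFT[OF p] by (blast intro: always_eventually)
  then have "\<exists>s'. (\<lambda>m. snd (P m (Suc L))) \<longlonglongrightarrow> s' \<and> us_stepN M (X L, s) (X (Suc L), s')"
    by (intro us_stepN_limit[OF Suc.prems(2)[of L] Suc.prems(2)[of "Suc L"] s(1)])
      (use Suc.prems in simp_all)
  then show ?case
    using s(2) by (meson relpowp_Suc_I)
qed

lemma ACN_paths:
  assumes p: "fst p \<in> SFT k A" and Q: "\<And>n. Q n \<in> ACN k A f N p"
  obtains P where "\<And>n. P n 0 = p" "\<And>n. P n N = Q n"
    "\<And>n l. l < N \<Longrightarrow> us_stepN N (P n l) (P n (Suc l))"
proof -
  have "\<exists>Pn. Pn 0 = p \<and> Pn N = Q n \<and> (\<forall>l<N. us_stepN N (Pn l) (Pn (Suc l)))" for n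
    using Q[of n] unfolding ACN_iff_relpowp[OF p] relpowp_fun_conv .
  then have "\<exists>P. \<forall>n. P n 0 = p \<and> P n N = Q n \<and> (\<forall>l<N. us_stepN N (P n l) (P n (Suc l)))"
    by (rule choice[OF allI])
  then obtain P where "\<And>n. P n 0 = p" "\<And>n. P n N = Q n"
    "\<And>n l. l < N \<Longrightarrow> us_stepN N (P n l) (P n (Suc l))"
    by blast
  then show ?thesis
    by (rule that)
qed

lemma us_stepN_paths_convergent_subseq:
  fixes P :: "nat \<Rightarrow> nat \<Rightarrow> (int \<Rightarrow> nat) \<times> real"
  assumes p: "fst p \<in> SFT k A" and start: "\<And>n. P n 0 = p"
    and steps: "\<And>n l. l < L \<Longrightarrow> us_stepN M (P n l) (P n (Suc l))"
  obtains r x s where "strict_mono r" "coordwise_limit (\<lambda>m. fst (P (r m) L)) x"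
    "(\<lambda>m. snd (P (r m) L)) \<longlonglongrightarrow> s" "(us_stepN M ^^ L) p (x, s)"
proof -
  have P_SFT: "fst (P n l) \<in> SFT k A" if "l \<le> L" for n l
  proof -
    have "(us_stepN M ^^ l) p (P n l)"
      unfolding relpowp_fun_conv using start steps that by (intro exI[of _ "P n"]) simp
    then show ?thesis
      by (rule relpowp_us_stepN_SFT[OF p])
  qed
  obtain r X where r: "strict_mono r" "\<And>l. l \<le> L \<Longrightarrow> coordwise_limit (\<lambda>m. fst (P (r m) l)) (X l)"
    "\<And>l. eventually (\<lambda>m. P (r m) (Suc l) \<in> Wsn k A f (int M) (P (r m) l)) sequentially
      \<or> eventually (\<lambda>m. P (r m) (Suc l) \<notin> Wsn k A f (int M) (P (r m) l)) sequentially"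
  proof (rule coordwise_convergent_subseq[where Y = "\<lambda>m l. fst (P m l)" and L = L and k = k
        and S = "\<lambda>m l. P m (Suc l) \<in> Wsn k A f (int M) (P m l)"])
    show "fst (P m l) i < k" if "l \<le> L" for m l i
      using P_SFT[OF that] by (simp add: SFT_def)
  qed (rule that)
  have "\<exists>s. (\<lambda>m. snd (P (r m) L)) \<longlonglongrightarrow> s \<and> (us_stepN M ^^ L) p (X L, s)"
  proof (rule relpowp_us_stepN_limit[where P = "\<lambda>m. P (r m)" and L = L and M = M and X = X])
    show "fst p \<in> SFT k A" "P (r m) 0 = p" for m
      by (fact p start)+
    show "us_stepN M (P (r m) l) (P (r m) (Suc l))" if "l < L" for m l
      using steps[OF that] .
    show "coordwise_limit (\<lambda>m. fst (P (r m) l)) (X l)" if "l \<le> L" for l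
      using r(2)[OF that] .
  qed (rule r(3))
  then show ?thesis
    using that[OF r(1) r(2)[OF order_refl]] by blast
qed

lemma ACN_closedin:
  assumes p: "fst p \<in> SFT k A"
  shows "closedin (SigmaR_top k A \<theta>) (ACN k A f N p)"
proof (rule closedin_SigmaR_top_if_sequentially)
  show "ACN k A f N p \<subseteq> SFT k A \<times> UNIV"
    using relpowp_us_stepN_SFT[OF p] by (auto simp: ACN_us_stepN mem_Times_iff)
  fix Q q assume Q: "\<And>n. Q n \<in> ACN k A f N p"
    and fst_lim: "coordwise_limit (\<lambda>n. fst (Q n)) (fst q)"
    and snd_lim: "(\<lambda>n. snd (Q n)) \<longlonglongrightarrow> snd q"
  obtain P where P: "\<And>n. P n 0 = p" "\<And>n. P n N = Q n"
    "\<And>n l. l < N \<Longrightarrow> us_stepN N (P n l) (P n (Suc l))"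
    by (rule ACN_paths[OF p Q]) (rule that)
  obtain r x s where r: "strict_mono r" and x: "coordwise_limit (\<lambda>m. fst (P (r m) N)) x"
    and s: "(\<lambda>m. snd (P (r m) N)) \<longlonglongrightarrow> s" and path: "(us_stepN N ^^ N) p (x, s)"
  proof (rule us_stepN_paths_convergent_subseq[where P = P and L = N and M = N])
    show "fst p \<in> SFT k A" "P n 0 = p" for n
      by (fact p P(1))+
    show "us_stepN N (P n l) (P n (Suc l))" if "l < N" for n l
      using P(3)[OF that] .
  qed (rule that)
  have "x = fst q"
    using coordwise_limit_subseq[OF fst_lim r] x P(2) coordwise_limit_unique by auto
  moreover have "s = snd q"
    using LIMSEQ_subseq_LIMSEQ[OF snd_lim r] s P(2) LIMSEQ_unique by (auto simp: o_def)
  ultimately show "q \<in> ACN k A f N p"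
    using path ACN_iff_relpowp[OF p] by (cases q) simp
qed

section \<open>Local accessibility\<close>

lemma vertical_segment_in_ACN:
  assumes K: "compactin (SigmaR_top k A \<theta>) K" "K \<noteq> {}"
    and regular: "(SigmaR_top k A \<theta>) closure_of ((SigmaR_top k A \<theta>) interior_of K) = K"
    and p: "fst p \<in> SFT k A" and KAC: "K \<subseteq> AC k A f p"
  obtains e u N where "0 < e" "\<And>\<tau>. \<bar>\<tau>\<bar> < e \<Longrightarrow> vshift \<tau> u \<in> ACN k A f N p"
proof -
  have cover: "K \<subseteq> (\<Union>N. ACN k A f N p)"
  proof
    fix q assume "q \<in> K"
    then obtain N where "q \<in> ACN k A f N p"
      using KAC AC_imp_ACN by blast
    then show "q \<in> (\<Union>N. ACN k A f N p)"
      by blast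
  qed
  obtain N where "subtopology (SigmaR_top k A \<theta>) K interior_of (ACN k A f N p \<inter> K) \<noteq> {}"
    by (rule Baire_compactin[OF K Hausdorff_SigmaR_top cover ACN_closedin[OF p]])
  then obtain U where U: "openin (SigmaR_top k A \<theta>) U" "U \<noteq> {}" "U \<subseteq> ACN k A f N p \<inter> K"
    by (rule regular_closed_openin_subset[OF regular])
  then obtain u where u: "u \<in> U"
    by blast
  obtain n e where e: "0 < e" "cylinder n (fst u) e (snd u) \<subseteq> U"
    by (rule openin_contains_cylinder[OF U(1) u])
  have "fst u \<in> SFT k A"
    using openin_subset[OF U(1)] u topspace_SigmaR_top by auto
  then have "vshift \<tau> u \<in> cylinder n (fst u) e (snd u)" if "\<bar>\<tau>\<bar> < e" for \<tau>
    using that by (simp add: vshift_def cylinder_def dist_real_def)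
  then have "vshift \<tau> u \<in> ACN k A f N p" if "\<bar>\<tau>\<bar> < e" for \<tau>
    using that e(2) U(3) by blast
  with e(1) show ?thesis
    by (rule that)
qed

(* The stable leg replaces the past of y by that of y', the unstable leg then the future;
   both offsets are small because y and y' agree on a long window around 0. *)
lemma splice_two_steps:
  assumes y: "y \<in> SFT k A" and y': "y' \<in> SFT k A" and agr: "agree (Suc n) y y'" and n: "1 \<le> n"
  obtains a b where "\<bar>a\<bar> \<le> C * \<theta> ^ n / (1 - \<theta>)" "\<bar>b\<bar> \<le> C * \<theta> ^ n / (1 - \<theta>)"
    "\<And>t. (us_stepN (Suc n) ^^ 2) (y, t) (y', t + a + b)"
proof -
  have near: "y' i = y i" if "\<bar>i\<bar> \<le> int n" for i
    using agr that by (simp add: agree_def)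
  define z where "z = splice y' y"
  have z: "z \<in> SFT k A"
    unfolding z_def using y' y near[of "-1"] n by (intro splice_SFT) auto
  have zy: "z i = y i" if "- int n \<le> i" for i
    using near[of i] that by (auto simp: z_def splice_def)
  have y'z: "y' i = z i" if "i \<le> int n" for i
    using near[of i] that by (auto simp: z_def splice_def)
  have "\<bar>stable_offset y z\<bar> \<le> C * \<theta> ^ n / (1 - \<theta>)"
    using zy by (rule abs_stable_offset_le[OF y z])
  moreover have "\<bar>unstable_offset z y'\<bar> \<le> C * \<theta> ^ n / (1 - \<theta>)"
    using y'z by (rule abs_unstable_offset_le[OF z y'])
  moreover have "(us_stepN (Suc n) ^^ 2) (y, t) (y', t + stable_offset y z + unstable_offset z y')" for t
  proof -
    have "us_stepN (Suc n) (y, t) (z, t + stable_offset y z)"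
      using Wsn_iff_offset[OF y] z by (simp add: us_stepN_def z_def splice_def)
    moreover have "us_stepN (Suc n) (z, t + stable_offset y z) (y', t + stable_offset y z + unstable_offset z y')"
      using Wun_iff_offset[OF z] y' by (simp add: us_stepN_def z_def splice_def)
    ultimately show ?thesis
      by (auto simp: numeral_2_eq_2 intro!: relpowp_Suc_I2)
  qed
  ultimately show ?thesis
    by (rule that)
qed

lemma two_step_access:
  assumes "0 < e"
  obtains \<delta> R where "0 < \<delta>"
    "\<And>q q'. fst q \<in> SFT k A \<Longrightarrow> q' \<in> cylinder R (fst q) \<delta> (snd q) \<Longrightarrow>
      \<exists>\<tau>. \<bar>\<tau>\<bar> < e \<and> (us_stepN R ^^ 2) (vshift \<tau> q) q'"
proof -
  have "(\<lambda>n. C * \<theta> ^ n / (1 - \<theta>)) \<longlonglongrightarrow> 0"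
    using theta_pos theta_less_one
    by (intro tendsto_divide_zero tendsto_mult_right_zero LIMSEQ_power_zero) auto
  then have "eventually (\<lambda>n. C * \<theta> ^ n / (1 - \<theta>) < e / 3 \<and> 1 \<le> n) sequentially"
    using assms by (intro eventually_conj order_tendstoD(2) eventually_ge_at_top) auto
  then obtain n where n: "C * \<theta> ^ n / (1 - \<theta>) < e / 3" "1 \<le> n"
    using eventually_happens'[OF sequentially_bot] by blast
  show ?thesis
  proof (rule that[of "e / 3" "Suc n"])
    show "0 < e / 3"
      using assms by simp
    fix q q' assume q: "fst q \<in> SFT k A" and q': "q' \<in> cylinder (Suc n) (fst q) (e / 3) (snd q)"
    obtain y t y' t' where qs: "q = (y, t)" "q' = (y', t')"
      by fastforce
    have y: "y \<in> SFT k A" and y': "y' \<in> SFT k A" and agr: "agree (Suc n) y y'"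
      and t: "\<bar>t' - t\<bar> < e / 3"
      using q q' qs by (auto simp: cylinder_def dist_real_def abs_minus_commute)
    obtain a b where a: "\<bar>a\<bar> \<le> C * \<theta> ^ n / (1 - \<theta>)" and b: "\<bar>b\<bar> \<le> C * \<theta> ^ n / (1 - \<theta>)"
      and steps: "\<And>t. (us_stepN (Suc n) ^^ 2) (y, t) (y', t + a + b)"
      by (rule splice_two_steps[OF y y' agr n(2)]) (rule that)
    have "\<bar>t' - t - a - b\<bar> < e"
      using a b t n(1) by linarith
    moreover have "(us_stepN (Suc n) ^^ 2) (vshift (t' - t - a - b) q) q'"
      using steps[of "t + (t' - t - a - b)"] qs by (simp add: vshift_def)
    ultimately show "\<exists>\<tau>. \<bar>\<tau>\<bar> < e \<and> (us_stepN (Suc n) ^^ 2) (vshift \<tau> q) q'"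
      by blast
  qed
qed

lemma ACN_connect:
  assumes p: "fst p \<in> SFT k A" and "u \<in> ACN k A f N p" "q \<in> ACN k A f M p"
  obtains j where "(us_stepN (N + M) ^^ j) u q"
proof -
  obtain i j where i: "(us_stepN N ^^ i) p u" and j: "(us_stepN M ^^ j) p q"
    using assms(2,3) by (auto simp: ACN_us_stepN)
  have "(us_stepN (N + M) ^^ i) u p"
    using relpowp_us_stepN_mono[OF _ relpowp_us_stepN_sym[OF p i]] by simp
  moreover have "(us_stepN (N + M) ^^ j) p q"
    using relpowp_us_stepN_mono[OF _ j] by simp
  ultimately have "(us_stepN (N + M) ^^ (i + j)) u q"
    by (rule relpowp_trans)
  then show ?thesis
    by (rule that)
qed

lemma AC_locally_in_ACN:
  assumes p: "fst p \<in> SFT k A" and e: "0 < e"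
    and segment: "\<And>\<tau>. \<bar>\<tau>\<bar> < e \<Longrightarrow> vshift \<tau> u \<in> ACN k A f N p"
    and q: "q \<in> AC k A f p"
  shows "\<exists>V L. openin (SigmaR_top k A \<theta>) V \<and> q \<in> V \<and> V \<subseteq> ACN k A f L p"
proof -
  obtain M where qM: "q \<in> ACN k A f M p"
    by (rule AC_imp_ACN[OF q])
  have "u \<in> ACN k A f N p"
    using segment[of 0] e by (simp add: vshift_def)
  then obtain j where j: "(us_stepN (N + M) ^^ j) u q"
    by (rule ACN_connect[OF p _ qM])
  obtain \<delta> R where \<delta>: "0 < \<delta>" and access: "\<And>q q'. fst q \<in> SFT k A \<Longrightarrow>
      q' \<in> cylinder R (fst q) \<delta> (snd q) \<Longrightarrow> \<exists>\<tau>. \<bar>\<tau>\<bar> < e \<and> (us_stepN R ^^ 2) (vshift \<tau> q) q'"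
    by (rule two_step_access[OF e]) (rule that)
  obtain i where "(us_stepN M ^^ i) p q"
    using qM by (auto simp: ACN_us_stepN)
  then have q_SFT: "fst q \<in> SFT k A"
    by (rule relpowp_us_stepN_SFT[OF p])
  (* q' is reached along p, vshift tau u, vshift tau q, q'. *)
  let ?L = "N + (N + M) + j + R + 2"
  have "cylinder R (fst q) \<delta> (snd q) \<subseteq> ACN k A f ?L p"
  proof
    fix q' assume "q' \<in> cylinder R (fst q) \<delta> (snd q)"
    then obtain \<tau> where \<tau>: "\<bar>\<tau>\<bar> < e" "(us_stepN R ^^ 2) (vshift \<tau> q) q'"
      using access[OF q_SFT] by blast
    have "vshift \<tau> q \<in> ACN k A f (N + (N + M) + j) p"
      using ACN_trans[OF segment[OF \<tau>(1)] relpowp_us_stepN_vshift[OF j]] .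
    then show "q' \<in> ACN k A f ?L p"
      using ACN_trans[OF _ \<tau>(2)] by simp
  qed
  moreover have "q \<in> cylinder R (fst q) \<delta> (snd q)"
    using q_SFT \<delta> by (cases q) (simp add: cylinder_def)
  ultimately show ?thesis
    by (intro exI[of _ "cylinder R (fst q) \<delta> (snd q)"] exI[of _ ?L] conjI openin_cylinder)
qed

end

theorem proposition9p4:
  fixes k :: nat and A :: "nat \<Rightarrow> nat \<Rightarrow> bool" and \<theta> :: real
    and f :: "(int \<Rightarrow> nat) \<Rightarrow> real"
    and K :: "((int \<Rightarrow> nat) \<times> real) set" and p :: "(int \<Rightarrow> nat) \<times> real"
  assumes "0 < \<theta>" and "\<theta> < 1"
    and "\<exists>C. \<forall>x\<in>SFT k A. \<forall>y\<in>SFT k A. \<bar>f x - f y\<bar> \<le> C * dtheta \<theta> x y"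
    and "compactin (SigmaR_top k A \<theta>) K"
    and "(SigmaR_top k A \<theta>) closure_of ((SigmaR_top k A \<theta>) interior_of K) = K"
    and "p \<in> SFT k A \<times> UNIV"
    and "K \<subseteq> AC k A f p"
  shows "\<exists>N. K \<subseteq> ACN k A f N p"
proof -
  obtain C where C: "\<forall>x\<in>SFT k A. \<forall>y\<in>SFT k A. \<bar>f x - f y\<bar> \<le> C * dtheta \<theta> x y"
    using assms(3) by blast
  interpret lipschitz_potential k A \<theta> f "max C 0"
  proof
    fix x y assume "x \<in> SFT k A" "y \<in> SFT k A"
    moreover have "0 \<le> dtheta \<theta> x y"
      using Metric_space.nonneg[OF Metric_space_dtheta[OF assms(1,2)]] .
    ultimately show "\<bar>f x - f y\<bar> \<le> max C 0 * dtheta \<theta> x y"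
      using C by (meson max.cobounded1 mult_right_mono order_trans)
  qed (use assms(1,2) in auto)
  have p: "fst p \<in> SFT k A"
    using assms(6) by auto
  show ?thesis
  proof (cases "K = {}")
    case False
    obtain e u N where e: "0 < e" and segment: "\<And>\<tau>. \<bar>\<tau>\<bar> < e \<Longrightarrow> vshift \<tau> u \<in> ACN k A f N p"
      by (rule vertical_segment_in_ACN[OF assms(4) False assms(5) p assms(7)]) (rule that)
    have "\<exists>V L. openin (SigmaR_top k A \<theta>) V \<and> q \<in> V \<and> V \<subseteq> ACN k A f L p" if q: "q \<in> K" for q
      using AC_locally_in_ACN[OF p e segment subsetD[OF assms(7) q]] .
    then obtain N' where "K \<subseteq> ACN k A f N' p"
      by (rule compactin_subset_mono[OF assms(4) mono_ACN])
    then show ?thesis ..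
  qed simp
qed

end
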